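(* Let $F$ be any field. Let $u\in\mathbb{N}$ and $m,n,r\in\mathbb{N}$ with $m+n\le u$, $r\le m$ and $r\le n$. Let $s=m+n-r$ and let $x\in F^{u+1}$. Then $\operatorname{rank}(H_{m,n}(x))\le r$ if and only if $\operatorname{rank}(H_{r,s}(x))\le r$.
   Context: $\mathbb{N}=\{0,1,2,\ldots\}$. For $N\in\mathbb{N}$, $x=(x_0,\ldots,x_N)\in F^{N+1}$ and integers $p,p'\ge -1$ with $p+p'\le N$, the Hankel matrix $H_{p,p'}(x)$ is the $(p+1)\times(p'+1)$ matrix $(x_{i+j})_{0\le i\le p,\,0\le j\le p'}$. *)

theory Defs
  imports "Jordan_Normal_Form.DL_Rank"
begin

text \<open>Hankel matrix H_{p,p'}(x) = (x_{i+j}), 0 \<le> i \<le> p, 0 \<le> j \<le> p',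
  a (p+1) x (p'+1) matrix; x = (x_0,...,x_N) is represented as a list of length N+1.\<close>
definition hankel :: "nat \<Rightarrow> nat \<Rightarrow> 'a list \<Rightarrow> 'a mat" where
  "hankel p p' x = mat (p + 1) (p' + 1) (\<lambda>(i, j). x ! (i + j))"

definition mrank :: "'a::field mat \<Rightarrow> nat" where
  "mrank A = vec_space.rank (dim_row A) A"

end

theory Submission
  imports Defs
begin

text \<open>
  For \<open>r \<le> P\<close> and \<open>r \<le> Q\<close>, \<open>rank H(P,Q) \<le> r\<close> holds iff \<open>x(0), \<dots>, x(P+Q)\<close> satisfy a
  nontrivial linear recurrence \<open>\<Sum>k\<le>r. c(k) x(k+l) = 0\<close> for all \<open>l \<le> P + Q - r\<close>; for both
  matrices of the theorem this is the same condition.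

  Given such a recurrence, normalised to be monic of order \<open>t \<le> r\<close>, every column of \<open>H(P,Q)\<close>
  except the first \<open>t\<close> and the last \<open>r - t\<close> is a combination of the \<open>t\<close> columns before it.

  Conversely, if the rank is at most \<open>r\<close>, the first \<open>r + 1\<close> columns are dependent; take a
  dependency of least order \<open>t\<close>, normalised to be monic, and suppose its residual
  \<open>g(l) = \<Sum>k\<le>t. e(k) x(k+l)\<close>, which vanishes for \<open>l \<le> P\<close>, first fails to vanish at
  \<open>l = P + d \<le> P + Q - r\<close>. Then the first \<open>t\<close> columns together with the \<open>r - t + 1\<close> vectors
  \<open>(g(i+d+p))\<^sub>i\<^sub>\<le>\<^sub>P\<close>, \<open>p \<le> r - t\<close>, are \<open>r + 1\<close> independent vectors in the column space: the
  \<open>g\<close>-part is triangular with diagonal \<open>g(P+d) \<noteq> 0\<close>, and a combination of the first \<open>t\<close>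
  columns vanishing on the first \<open>t\<close> rows vanishes on all rows by the recurrence, hence is
  trivial by minimality of \<open>t\<close>.
\<close>

lemma sum_lessThan_add:
  fixes f :: "nat \<Rightarrow> 'b::comm_monoid_add"
  shows "(\<Sum>j<t + s. f j) = (\<Sum>j<t. f j) + (\<Sum>p<s. f (t + p))"
  by (induction s) (auto simp: add.assoc)

lemma index_mat_mult_vec:
  assumes "i < nr" "v \<in> carrier_vec nc"
  shows "(mat nr nc f *\<^sub>v v) $ i = (\<Sum>j<nc. f (i, j) * v $ j)"
  using assms by (auto simp: scalar_prod_def atLeast0LessThan intro!: sum.cong)

lemma mult_mat_vec_unit_vec:
  fixes A :: "'a::semiring_1 mat"
  assumes "A \<in> carrier_mat nr nc" "j < nc"
  shows "A *\<^sub>v unit_vec nc j = col A j"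
  using assms by (intro eq_vecI) (auto simp: scalar_prod_right_unit)

lemma distinct_cols_if_mult_mat_vec_inj:
  fixes B :: "'a::ring_1 mat"
  assumes B: "B \<in> carrier_mat nr nc"
    and inj: "\<And>v. v \<in> carrier_vec nc \<Longrightarrow> B *\<^sub>v v = 0\<^sub>v nr \<Longrightarrow> v = 0\<^sub>v nc"
  shows "distinct (cols B)"
proof (rule ccontr)
  assume "\<not> distinct (cols B)"
  then obtain a b where ab: "a < nc" "b < nc" "a \<noteq> b" "col B a = col B b"
    using B by (auto simp: distinct_conv_nth)
  let ?v = "unit_vec nc a - unit_vec nc b :: 'a vec"
  have "B *\<^sub>v ?v = col B a - col B b"
    using B ab by (simp add: mult_minus_distrib_mat_vec mult_mat_vec_unit_vec)
  also have "\<dots> = 0\<^sub>v nr"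
    using B ab by (intro eq_vecI) auto
  finally have "?v = 0\<^sub>v nc" using inj[of ?v] by simp
  then have "?v $ a = 0" using ab(1) by simp
  then show False using ab by simp
qed

context vec_space
begin

lemma rank_le_of_cols_in_span:
  assumes A: "A \<in> carrier_mat n na" and B: "B \<in> carrier_mat n nb"
    and sub: "set (cols B) \<subseteq> span (set (cols A))"
  shows "rank B \<le> rank A"
proof -
  have cA: "set (cols A) \<subseteq> carrier_vec n" and cB: "set (cols B) \<subseteq> carrier_vec n"
    using A B cols_dim by blast+
  have sA: "subspace class_ring (span (set (cols A))) V"
    and sB: "subspace class_ring (span (set (cols B))) V"
    using span_is_subspace cA cB by blast+
  have "subspace class_ring (span (set (cols B))) (vs (span (set (cols A))))"
    using nested_subspaces[OF sA sB span_subsetI[OF cA sub]] .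
  then show ?thesis unfolding rank_def
    using vectorspace.subspace_dim[OF subspace_is_vs[OF sA] _ fin_dim_span_cols[OF A]]
      fin_dim_span_cols[OF B] by auto
qed

lemma rank_eq_dim_col_if_mult_mat_vec_inj:
  assumes B: "B \<in> carrier_mat n nc"
    and inj: "\<And>v. v \<in> carrier_vec nc \<Longrightarrow> B *\<^sub>v v = 0\<^sub>v n \<Longrightarrow> v = 0\<^sub>v nc"
  shows "rank B = nc"
proof -
  have dist: "distinct (cols B)" using distinct_cols_if_mult_mat_vec_inj[OF B inj] .
  have "lin_indpt (set (cols B))"
  proof
    assume "lin_dep (set (cols B))"
    then obtain v where "v \<in> carrier_vec nc" "v \<noteq> 0\<^sub>v nc" "B *\<^sub>v v = 0\<^sub>v n"
      using lin_depE[OF B _ dist] by blast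
    then show False using inj by blast
  qed
  then show ?thesis using lin_indpt_full_rank[OF B dist] by blast
qed

lemma dim_col_le_rank_if_mult_mat_vec_inj:
  assumes A: "A \<in> carrier_mat n na" and B: "B \<in> carrier_mat n k"
    and cols: "\<And>j. j < k \<Longrightarrow> col B j \<in> span (set (cols A))"
    and inj: "\<And>v. v \<in> carrier_vec k \<Longrightarrow> B *\<^sub>v v = 0\<^sub>v n \<Longrightarrow> v = 0\<^sub>v k"
  shows "k \<le> rank A"
proof -
  have "set (cols B) \<subseteq> span (set (cols A))"
    using B cols by (auto simp: in_set_conv_nth)
  then show ?thesis
    using rank_eq_dim_col_if_mult_mat_vec_inj[OF B inj] rank_le_of_cols_in_span[OF A B] by simp
qed

lemma col_in_span_cols:
  assumes "A \<in> carrier_mat n nc" "j < nc"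
  shows "col A j \<in> span (set (cols A))"
  using assms by (intro span_mem) (auto simp: cols_def)

lemma sum_vec_in_span:
  fixes M :: nat
  assumes S: "S \<subseteq> carrier_vec n"
    and f: "\<And>k. k < M \<Longrightarrow> f k \<in> span S \<and> f k \<in> carrier_vec n"
  shows "vec n (\<lambda>i. \<Sum>k<M. c k * f k $ i) \<in> span S"
  using f
proof (induction M)
  case 0
  have "vec n (\<lambda>i. \<Sum>k<0. c k * f k $ i) = 0\<^sub>v n" by (rule eq_vecI) simp_all
  then show ?case
    using submodule.zero_closed[OF span_is_submodule[OF S]] by (simp add: module_vec_simps)
next
  case (Suc M)
  have fM: "f M \<in> carrier_vec n" using Suc.prems[of M] by auto
  have "vec n (\<lambda>i. \<Sum>k<Suc M. c k * f k $ i) = vec n (\<lambda>i. \<Sum>k<M. c k * f k $ i) + c M \<cdot>\<^sub>v f M"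
    using fM by (intro eq_vecI) simp_all
  moreover have "c M \<cdot>\<^sub>v f M \<in> span S" using Suc.prems[of M] S by (intro smult_in_span) auto
  ultimately show ?case using Suc span_add1[OF S] by (simp add: module_vec_simps)
qed

end

text \<open>Equivalently: the columns of the Hankel matrix \<open>H(L,k)\<close> of \<open>s\<close> are linearly dependent.\<close>

definition lin_recurrent :: "nat \<Rightarrow> nat \<Rightarrow> (nat \<Rightarrow> 'a::comm_ring_1) \<Rightarrow> bool" where
  "lin_recurrent k L s \<longleftrightarrow> (\<exists>c. (\<exists>j\<le>k. c j \<noteq> 0) \<and> (\<forall>l\<le>L. (\<Sum>j\<le>k. c j * s (j + l)) = 0))"

lemma lin_recurrent_mono:
  assumes "lin_recurrent k L s" "k \<le> k'"
  shows "lin_recurrent k' L s"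
proof -
  obtain c j0 where c: "j0 \<le> k" "c j0 \<noteq> 0" "\<forall>l\<le>L. (\<Sum>j\<le>k. c j * s (j + l)) = 0"
    using assms(1) unfolding lin_recurrent_def by blast
  let ?c = "\<lambda>j. if j \<le> k then c j else 0"
  have "(\<Sum>j\<le>k'. ?c j * s (j + l)) = (\<Sum>j\<le>k. c j * s (j + l))" for l
    using assms(2) by (intro sum.mono_neutral_cong_right) auto
  then show ?thesis
    unfolding lin_recurrent_def using c assms(2) by (intro exI[of _ ?c] conjI exI[of _ j0]) auto
qed

lemma lin_recurrent_minimal_monic:
  fixes s :: "nat \<Rightarrow> 'a::field"
  assumes "lin_recurrent k L s"
  obtains t e where "t \<le> k" "\<And>k'. k' < t \<Longrightarrow> \<not> lin_recurrent k' L s"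
    and "e t = 1" "\<And>l. l \<le> L \<Longrightarrow> (\<Sum>j\<le>t. e j * s (j + l)) = 0"
proof -
  define t where "t = (LEAST k. lin_recurrent k L s)"
  have "t \<le> k" "lin_recurrent t L s" and minimal: "\<And>k'. k' < t \<Longrightarrow> \<not> lin_recurrent k' L s"
    unfolding t_def using assms by (auto intro: Least_le LeastI dest: not_less_Least)
  then obtain c where c: "\<exists>j\<le>t. c j \<noteq> 0" "\<forall>l\<le>L. (\<Sum>j\<le>t. c j * s (j + l)) = 0"
    unfolding lin_recurrent_def by blast
  have "c t \<noteq> 0"
  proof
    assume "c t = 0"
    with c obtain t' where t': "t = Suc t'"
      by (metis le_zero_eq not0_implies_Suc)
    have "lin_recurrent t' L s"
      unfolding lin_recurrent_def using c \<open>c t = 0\<close> t' by (intro exI[of _ c]) (auto simp: le_Suc_eq)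
    then show False using minimal t' by simp
  qed
  let ?e = "\<lambda>j. c j / c t"
  have "(\<Sum>j\<le>t. ?e j * s (j + l)) = 0" if "l \<le> L" for l
    using c(2) that by (simp add: sum_divide_distrib[symmetric])
  then show thesis using that[of t ?e] \<open>t \<le> k\<close> minimal \<open>c t \<noteq> 0\<close> by auto
qed

lemma sum_atMost_monic:
  fixes e :: "nat \<Rightarrow> 'a::comm_ring_1"
  assumes "e t = 1"
  shows "(\<Sum>j\<le>t. e j * s j) = s t + (\<Sum>j<t. e j * s j)"
  using assms by (simp add: lessThan_Suc_atMost[symmetric])

lemma combination_eq_0_by_monic_recurrence:
  fixes s :: "nat \<Rightarrow> 'a::comm_ring_1"
  assumes e: "e t = 1" "\<And>l. l \<le> L \<Longrightarrow> (\<Sum>j\<le>t. e j * s (j + l)) = 0"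
    and a: "\<And>i. i < t \<Longrightarrow> (\<Sum>j<t. a j * s (i + j)) = 0"
  shows "i \<le> L \<Longrightarrow> (\<Sum>j<t. a j * s (i + j)) = 0"
proof (induction i rule: less_induct)
  case (less i)
  show ?case
  proof (cases "i < t")
    case False
    have step: "s (i + j) = - (\<Sum>k<t. e k * s ((i - t + k) + j))" if "j < t" for j
      using e(2)[of "i - t + j"] sum_atMost_monic[where e=e and t=t and s="\<lambda>k. s (k + (i - t + j))", OF e(1)]
        that False less.prems by (simp add: eq_neg_iff_add_eq_0 ac_simps)
    have "(\<Sum>j<t. a j * s (i + j)) = - (\<Sum>j<t. \<Sum>k<t. e k * (a j * s ((i - t + k) + j)))"
      by (simp add: step sum_distrib_left sum_negf mult.left_commute)
    also have "\<dots> = - (\<Sum>k<t. e k * (\<Sum>j<t. a j * s ((i - t + k) + j)))"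
      by (subst sum.swap) (simp add: sum_distrib_left)
    also have "\<dots> = 0"
    proof -
      have "(\<Sum>j<t. a j * s ((i - t + k) + j)) = 0" if "k < t" for k
        using that False less.prems by (intro less.IH) auto
      then show ?thesis by simp
    qed
    finally show ?thesis .
  qed (use a in simp)
qed

lemma combination_eq_0_imp_coeffs_zero:
  fixes s :: "nat \<Rightarrow> 'a::field"
  assumes minimal: "\<And>k. k < t \<Longrightarrow> \<not> lin_recurrent k L s"
    and e: "e t = 1" "\<And>l. l \<le> L \<Longrightarrow> (\<Sum>j\<le>t. e j * s (j + l)) = 0"
    and a: "\<And>i. i < t \<Longrightarrow> (\<Sum>j<t. a j * s (i + j)) = 0"
    and "j < t"
  shows "a j = 0"
proof (rule ccontr)
  assume "a j \<noteq> 0"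
  have "{..<t} = {..t - 1}" using \<open>j < t\<close> by auto
  then have "lin_recurrent (t - 1) L s"
    unfolding lin_recurrent_def
    using \<open>j < t\<close> \<open>a j \<noteq> 0\<close> combination_eq_0_by_monic_recurrence[OF e a]
    by (intro exI[of _ a]) (auto simp: ac_simps)
  then show False using minimal \<open>j < t\<close> by simp
qed

lemma triangular_coeffs_zero:
  fixes g :: "nat \<Rightarrow> 'a::idom"
  assumes below: "\<And>l. l < L \<Longrightarrow> g l = 0" and "g L \<noteq> 0" "w \<le> L"
    and b: "\<And>q. q \<le> w \<Longrightarrow> (\<Sum>p\<le>w. b p * g (L - q + p)) = 0"
  shows "p \<le> w \<Longrightarrow> b p = 0"
proof (induction "w - p" arbitrary: p rule: less_induct)
  case less
  have "b p' * g (L - p + p') = (if p' = p then b p * g L else 0)" if "p' \<le> w" for p'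
  proof (cases p' p rule: linorder_cases)
    case less
    then show ?thesis using below \<open>p \<le> w\<close> \<open>w \<le> L\<close> by simp
  next
    case greater
    then show ?thesis using less.hyps[of p'] that by simp
  qed (use \<open>p \<le> w\<close> \<open>w \<le> L\<close> in simp)
  then have "(\<Sum>p'\<le>w. b p' * g (L - p + p')) = (\<Sum>p'\<le>w. if p' = p then b p * g L else 0)"
    by (intro sum.cong) auto
  also have "\<dots> = b p * g L" using \<open>p \<le> w\<close> by simp
  finally have "(\<Sum>p'\<le>w. b p' * g (L - p + p')) = b p * g L" .
  then show ?case using b[OF \<open>p \<le> w\<close>] \<open>g L \<noteq> 0\<close> by simp
qed

lemma block_combination_eq_0_imp_coeffs_zero:
  fixes s g :: "nat \<Rightarrow> 'a::field"
  assumes minimal: "\<And>k. k < t \<Longrightarrow> \<not> lin_recurrent k P s"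
    and e: "e t = 1" "\<And>l. l \<le> P \<Longrightarrow> (\<Sum>j\<le>t. e j * s (j + l)) = 0"
    and below: "\<And>l. l < P + d \<Longrightarrow> g l = 0" and "g (P + d) \<noteq> 0" and "t \<le> r" "r \<le> P"
    and comb: "\<And>i. i \<le> P \<Longrightarrow>
      (\<Sum>j<r + 1. (if j < t then s (i + j) else g (i + d + (j - t))) * c j) = 0"
  shows "j \<le> r \<Longrightarrow> c j = 0"
proof -
  define w where "w = r - t"
  have comb': "(\<Sum>j<t. c j * s (i + j)) + (\<Sum>p\<le>w. c (t + p) * g (i + d + p)) = 0" if "i \<le> P" for i
  proof -
    have "r + 1 = t + (w + 1)" using \<open>t \<le> r\<close> unfolding w_def by simp
    then show ?thesis using comb[OF that, unfolded \<open>r + 1 = t + (w + 1)\<close> sum_lessThan_add]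
      by (simp add: lessThan_Suc_atMost[symmetric] mult.commute)
  qed
  have a: "c j = 0" if "j < t" for j
  proof (rule combination_eq_0_imp_coeffs_zero[OF minimal e _ that])
    fix i assume "i < t"
    then have "(\<Sum>p\<le>w. c (t + p) * g (i + d + p)) = 0"
      using below \<open>t \<le> r\<close> \<open>r \<le> P\<close> unfolding w_def by (intro sum.neutral) auto
    then show "(\<Sum>j<t. c j * s (i + j)) = 0" using comb'[of i] \<open>i < t\<close> \<open>t \<le> r\<close> \<open>r \<le> P\<close> by simp
  qed
  have b: "c (t + p) = 0" if "p \<le> w" for p
  proof (rule triangular_coeffs_zero[where g = g and L = "P + d" and b = "\<lambda>p. c (t + p)" and w = w,
        OF below \<open>g (P + d) \<noteq> 0\<close> _ _ that])
    show "w \<le> P + d" using \<open>r \<le> P\<close> unfolding w_def by simp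
    fix q assume "q \<le> w"
    then have "P - q + d + p = P + d - q + p" for p using \<open>r \<le> P\<close> unfolding w_def by simp
    then show "(\<Sum>p\<le>w. c (t + p) * g (P + d - q + p)) = 0" using comb'[of "P - q"] a by simp
  qed
  show "j \<le> r \<Longrightarrow> c j = 0"
    using a b[of "j - t"] unfolding w_def by (cases "j < t") auto
qed

lemma hankel_carrier: "hankel P Q x \<in> carrier_mat (P + 1) (Q + 1)"
  unfolding hankel_def by simp

lemma col_hankel: "j \<le> Q \<Longrightarrow> col (hankel P Q x) j = vec (P + 1) (\<lambda>i. x ! (i + j))"
  unfolding hankel_def by auto

lemma mrank_hankel: "mrank (hankel P Q x) = vec_space.rank (P + 1) (hankel P Q x)"
  unfolding mrank_def hankel_def by simp

lemma lin_recurrent_if_hankel_mult_vec_eq_0: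
  fixes x :: "'a::field list"
  assumes v: "v \<in> carrier_vec (Q + 1)" "v \<noteq> 0\<^sub>v (Q + 1)"
    and Hv: "hankel P Q x *\<^sub>v v = 0\<^sub>v (P + 1)"
  shows "lin_recurrent Q P (nth x)"
proof -
  obtain j where "j \<le> Q" "v $ j \<noteq> 0" using v by (auto simp: vec_eq_iff less_Suc_eq_le)
  moreover have "(\<Sum>j\<le>Q. v $ j * x ! (j + i)) = 0" if "i \<le> P" for i
  proof -
    have "(hankel P Q x *\<^sub>v v) $ i = (\<Sum>j<Q + 1. x ! (i + j) * v $ j)"
      unfolding hankel_def using that v by (subst index_mat_mult_vec) auto
    then show ?thesis using Hv that by (simp add: lessThan_Suc_atMost ac_simps)
  qed
  ultimately show ?thesis unfolding lin_recurrent_def by (intro exI[of _ "\<lambda>j. v $ j"]) auto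
qed

lemma col_hankel_by_monic_recurrence:
  fixes x :: "'a::comm_ring_1 list"
  assumes e: "e t = 1" "\<And>l. l \<le> L \<Longrightarrow> (\<Sum>k\<le>t. e k * x ! (k + l)) = 0"
    and j: "t \<le> j" "j \<le> Q" "P + j \<le> L + t"
  shows "col (hankel P Q x) j = vec (P + 1) (\<lambda>i. \<Sum>k<t. - e k * col (hankel P Q x) (j - t + k) $ i)"
proof (rule eq_vecI)
  fix i assume "i < dim_vec (vec (P + 1) (\<lambda>i. \<Sum>k<t. - e k * col (hankel P Q x) (j - t + k) $ i))"
  then have i: "i \<le> P" by simp
  have "x ! (i + j) = - (\<Sum>k<t. e k * x ! (k + (i + j - t)))"
    using e(2)[of "i + j - t"] sum_atMost_monic[where e = e and t = t and s = "\<lambda>k. x ! (k + (i + j - t))", OF e(1)]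
      i j by (simp add: eq_neg_iff_add_eq_0)
  then show "col (hankel P Q x) j $ i = vec (P + 1) (\<lambda>i. \<Sum>k<t. - e k * col (hankel P Q x) (j - t + k) $ i) $ i"
    using i j by (simp add: col_hankel sum_negf ac_simps)
qed (simp add: hankel_def)

context vec_space
begin

lemma lin_recurrent_if_rank_hankel_le:
  assumes n: "n = P + 1" and "r \<le> Q" and rank: "rank (hankel P Q x) \<le> r"
  shows "lin_recurrent r P (nth x)"
proof (rule ccontr)
  assume indep: "\<not> lin_recurrent r P (nth x)"
  have "r + 1 \<le> rank (hankel P Q x)"
  proof (rule dim_col_le_rank_if_mult_mat_vec_inj)
    show H: "hankel P Q x \<in> carrier_mat n (Q + 1)" "hankel P r x \<in> carrier_mat n (r + 1)"
      using n hankel_carrier by auto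
    fix j assume "j < r + 1"
    then have "col (hankel P r x) j = col (hankel P Q x) j" using \<open>r \<le> Q\<close> by (simp add: col_hankel)
    then show "col (hankel P r x) j \<in> span (set (cols (hankel P Q x)))"
      using col_in_span_cols[OF H(1)] \<open>j < r + 1\<close> \<open>r \<le> Q\<close> by simp
  next
    fix v assume "v \<in> carrier_vec (r + 1)" "hankel P r x *\<^sub>v v = 0\<^sub>v n"
    then show "v = 0\<^sub>v (r + 1)" using lin_recurrent_if_hankel_mult_vec_eq_0 indep n by blast
  qed
  then show False using rank by simp
qed

lemma rank_hankel_le_if_monic_recurrence:
  assumes n: "n = P + 1" and "t \<le> r" "r \<le> Q"
    and e: "e t = 1" "\<And>l. l \<le> P + Q - r \<Longrightarrow> (\<Sum>k\<le>t. e k * x ! (k + l)) = 0"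
  shows "rank (hankel P Q x) \<le> r"
proof -
  define H where "H = hankel P Q x"
  \<comment> \<open>the first \<open>t\<close> and the last \<open>r - t\<close> columns of \<open>H\<close>\<close>
  define U where "U = mat n r (\<lambda>(i, q). x ! (i + (if q < t then q else q + (Q + 1 - r))))"
  have H: "H \<in> carrier_mat n (Q + 1)" and U: "U \<in> carrier_mat n r"
    unfolding H_def U_def using n hankel_carrier by auto
  have "col H j \<in> span (set (cols U))" if "j \<le> Q" for j
    using that
  proof (induction j rule: less_induct)
    case (less j)
    show ?case
    proof (cases "j < t \<or> Q + t < j + r")
      case True
      define q where "q = (if j < t then j else j - (Q + 1 - r))"
      have "q < r" "col U q = col H j"
        using True less.prems \<open>t \<le> r\<close> \<open>r \<le> Q\<close> n unfolding q_def U_def H_def by (auto simp: col_hankel)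
      then show ?thesis using col_in_span_cols[OF U] by metis
    next
      case False
      then have j: "t \<le> j" "P + j \<le> P + Q - r + t" using \<open>r \<le> Q\<close> by auto
      have "col H j = vec n (\<lambda>i. \<Sum>k<t. - e k * col H (j - t + k) $ i)"
        unfolding H_def n using col_hankel_by_monic_recurrence[OF e j(1) less.prems j(2)] .
      also have "\<dots> \<in> span (set (cols U))"
        using less False H U cols_dim[of U] by (intro sum_vec_in_span) auto
      finally show ?thesis .
    qed
  qed
  then have "set (cols H) \<subseteq> span (set (cols U))" using H by (auto simp: in_set_conv_nth)
  then show ?thesis using rank_le_of_cols_in_span[OF U H] rank_le_nc[OF U] unfolding H_def by linarith
qed

lemma combination_of_shifted_cols_hankel_in_span:
  assumes n: "n = P + 1" and "d + t \<le> Q"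
  shows "vec n (\<lambda>i. \<Sum>k\<le>t. e k * x ! (k + (i + d))) \<in> span (set (cols (hankel P Q x)))"
proof -
  have H: "hankel P Q x \<in> carrier_mat n (Q + 1)" using n hankel_carrier by simp
  have "vec n (\<lambda>i. \<Sum>k\<le>t. e k * x ! (k + (i + d)))
      = vec n (\<lambda>i. \<Sum>k<t + 1. e k * col (hankel P Q x) (d + k) $ i)"
    using assms by (intro eq_vecI) (auto simp: col_hankel lessThan_Suc_atMost ac_simps intro!: sum.cong)
  also have "\<dots> \<in> span (set (cols (hankel P Q x)))"
    using H \<open>d + t \<le> Q\<close> col_in_span_cols[OF H] cols_dim[of "hankel P Q x"]
    by (intro sum_vec_in_span) auto
  finally show ?thesis .
qed

lemma rank_hankel_gt_if_monic_recurrence_breaks: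
  assumes n: "n = P + 1" and "t \<le> r" "r \<le> P" "d + r \<le> Q"
    and minimal: "\<And>k. k < t \<Longrightarrow> \<not> lin_recurrent k P (nth x)"
    and e: "e t = 1" "\<And>l. l \<le> P \<Longrightarrow> (\<Sum>k\<le>t. e k * x ! (k + l)) = 0"
    and below: "\<And>l. l < P + d \<Longrightarrow> (\<Sum>k\<le>t. e k * x ! (k + l)) = 0"
    and breaks: "(\<Sum>k\<le>t. e k * x ! (k + (P + d))) \<noteq> 0"
  shows "r < rank (hankel P Q x)"
proof -
  define g where "g l = (\<Sum>k\<le>t. e k * x ! (k + l))" for l
  define B where "B = mat n (r + 1) (\<lambda>(i, j). if j < t then x ! (i + j) else g (i + d + (j - t)))"
  have H: "hankel P Q x \<in> carrier_mat n (Q + 1)" and B: "B \<in> carrier_mat n (r + 1)"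
    using n hankel_carrier unfolding B_def by auto
  have "r + 1 \<le> rank (hankel P Q x)"
  proof (rule dim_col_le_rank_if_mult_mat_vec_inj[OF H B])
    fix j assume "j < r + 1"
    show "col B j \<in> span (set (cols (hankel P Q x)))"
    proof (cases "j < t")
      case True
      then have "col B j = col (hankel P Q x) j"
        using \<open>t \<le> r\<close> \<open>r \<le> P\<close> \<open>d + r \<le> Q\<close> n unfolding B_def by (auto simp: col_hankel)
      then show ?thesis using col_in_span_cols[OF H] True \<open>t \<le> r\<close> \<open>d + r \<le> Q\<close> by auto
    next
      case False
      then have "col B j = vec n (\<lambda>i. \<Sum>k\<le>t. e k * x ! (k + (i + (d + (j - t)))))"
        using \<open>j < r + 1\<close> unfolding B_def g_def by (auto simp: ac_simps)
      moreover have "d + (j - t) + t \<le> Q" using False \<open>j < r + 1\<close> \<open>d + r \<le> Q\<close> by simp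
      ultimately show ?thesis
        using combination_of_shifted_cols_hankel_in_span[OF n, where d = "d + (j - t)"] by simp
    qed
  next
    fix v assume v: "v \<in> carrier_vec (r + 1)" "B *\<^sub>v v = 0\<^sub>v n"
    have comb: "(\<Sum>j<r + 1. (if j < t then x ! (i + j) else g (i + d + (j - t))) * v $ j) = 0"
      if "i \<le> P" for i
    proof -
      have "(B *\<^sub>v v) $ i = (\<Sum>j<r + 1. (if j < t then x ! (i + j) else g (i + d + (j - t))) * v $ j)"
        unfolding B_def using that n v by (subst index_mat_mult_vec) auto
      then show ?thesis using v(2) that n by simp
    qed
    have "v $ j = 0" if "j \<le> r" for j
    proof (rule block_combination_eq_0_imp_coeffs_zero[where s = "nth x" and g = g and c = "\<lambda>j. v $ j",
          OF minimal e _ _ \<open>t \<le> r\<close> \<open>r \<le> P\<close> _ that])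
      show "\<And>l. l < P + d \<Longrightarrow> g l = 0" "g (P + d) \<noteq> 0"
        using below breaks unfolding g_def by auto
    qed (use comb in auto)
    then show "v = 0\<^sub>v (r + 1)" using v(1) by (intro eq_vecI) (auto simp: less_Suc_eq_le)
  qed
  then show ?thesis by simp
qed

lemma monic_recurrence_extends:
  assumes n: "n = P + 1" and "r \<le> P" "r \<le> Q" and rank: "rank (hankel P Q x) \<le> r"
    and "t \<le> r" and minimal: "\<And>k. k < t \<Longrightarrow> \<not> lin_recurrent k P (nth x)"
    and e: "e t = 1" "\<And>l. l \<le> P \<Longrightarrow> (\<Sum>k\<le>t. e k * x ! (k + l)) = 0"
  shows "l \<le> P + Q - r \<Longrightarrow> (\<Sum>k\<le>t. e k * x ! (k + l)) = 0"
proof (rule ccontr)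
  assume "l \<le> P + Q - r" "(\<Sum>k\<le>t. e k * x ! (k + l)) \<noteq> 0"
  then obtain L0 where "L0 \<le> l" and breaks: "(\<Sum>k\<le>t. e k * x ! (k + L0)) \<noteq> 0"
    and below: "\<And>l. l < L0 \<Longrightarrow> (\<Sum>k\<le>t. e k * x ! (k + l)) = 0"
    using exists_least_iff[of "\<lambda>l. (\<Sum>k\<le>t. e k * x ! (k + l)) \<noteq> 0"] by (metis not_le)
  then obtain d where L0: "L0 = P + d" using e(2) by (metis less_imp_add_positive not_le)
  then have "r < rank (hankel P Q x)"
    using rank_hankel_gt_if_monic_recurrence_breaks[OF n \<open>t \<le> r\<close> \<open>r \<le> P\<close> _ minimal e
        below[unfolded L0] breaks[unfolded L0]]
      \<open>L0 \<le> l\<close> \<open>l \<le> P + Q - r\<close> \<open>r \<le> Q\<close> by simp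
  then show False using rank by simp
qed

end

lemma rank_hankel_le_iff_lin_recurrent:
  fixes x :: "'a::field list"
  assumes "r \<le> P" "r \<le> Q"
  shows "mrank (hankel P Q x) \<le> r \<longleftrightarrow> lin_recurrent r (P + Q - r) (nth x)"
proof -
  interpret vec_space "TYPE('a)" "P + 1" .
  show ?thesis
  proof
    assume "mrank (hankel P Q x) \<le> r"
    then have rank: "rank (hankel P Q x) \<le> r" by (simp add: mrank_hankel)
    obtain t e where "t \<le> r" and minimal: "\<And>k. k < t \<Longrightarrow> \<not> lin_recurrent k P (nth x)"
      and e: "e t = 1" "\<And>l. l \<le> P \<Longrightarrow> (\<Sum>k\<le>t. e k * x ! (k + l)) = 0"
      using lin_recurrent_minimal_monic[OF lin_recurrent_if_rank_hankel_le[OF refl \<open>r \<le> Q\<close> rank]]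
      by blast
    have "(\<Sum>k\<le>t. e k * x ! (k + l)) = 0" if "l \<le> P + Q - r" for l
      using monic_recurrence_extends[OF refl assms rank \<open>t \<le> r\<close> minimal e that] .
    then have "lin_recurrent t (P + Q - r) (nth x)"
      unfolding lin_recurrent_def using e(1) by (intro exI[of _ e]) auto
    then show "lin_recurrent r (P + Q - r) (nth x)" using lin_recurrent_mono \<open>t \<le> r\<close> by blast
  next
    assume "lin_recurrent r (P + Q - r) (nth x)"
    then obtain t e where "t \<le> r" "e t = 1" "\<And>l. l \<le> P + Q - r \<Longrightarrow> (\<Sum>k\<le>t. e k * x ! (k + l)) = 0"
      by (rule lin_recurrent_minimal_monic) blast
    then show "mrank (hankel P Q x) \<le> r"
      using rank_hankel_le_if_monic_recurrence[OF refl _ \<open>r \<le> Q\<close>] by (simp add: mrank_hankel)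
  qed
qed

theorem lemma11:
  fixes x :: "'a::field list" and u m n r :: nat
  assumes "length x = u + 1"
    and "m + n \<le> u" and "r \<le> m" and "r \<le> n"
  shows "mrank (hankel m n x) \<le> r \<longleftrightarrow> mrank (hankel r (m + n - r) x) \<le> r"
proof -
  have "mrank (hankel m n x) \<le> r \<longleftrightarrow> lin_recurrent r (m + n - r) (nth x)"
    using assms by (intro rank_hankel_le_iff_lin_recurrent)
  also have "\<dots> \<longleftrightarrow> mrank (hankel r (m + n - r) x) \<le> r"
    using rank_hankel_le_iff_lin_recurrent[of r r "m + n - r" x] assms by simp
  finally show ?thesis .
qed

end
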